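(* Let $q$ be a power of an odd prime $p$ with $q>5$, let $3\le h\le k$ be integers, let $$D_2=\Bigl\{(x_1,\ldots,x_k)\in\mathbb{F}_q^k\setminus\{0\}:\prod_{1\le i<j\le h}(x_i+x_j)=0\Bigr\},$$ and let $n=\#D_2$. Then the minimum nonzero weight of $\mathrm{C}_{D_2}$ is $n-q^{k-1}+1$, and it is attained exactly by the codewords associated with the hyperplanes $x_i+x_j=0$, $1\le i<j\le h$ (i.e. by the codewords $c_f$ with $f=\lambda(x_i+x_j)$, $\lambda\in\mathbb{F}_q^*$).
   Context: For a finite ordered set $D=\{P_1,\ldots,P_n\}\subseteq\mathbb{F}_q^k$, $\mathrm{C}_D=\{c_f=(f(P_1),\ldots,f(P_n)):f:\mathbb{F}_q^k\to\mathbb{F}_q\text{ linear}\}$; the codeword associated with a hyperplane through the origin is $c_f$ for a linear form $f$ defining it. Weights are Hamming weights. *)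

theory Defs
  imports "HOL-Library.FuncSet" "HOL-Computational_Algebra.Primes"
begin

text \<open>Vectors of F_q^k are modelled as functions nat => F with support in {..<k};
 coordinates x_1..x_k of the paper are indices 0..k-1.\<close>

definition kvecs :: "nat \<Rightarrow> (nat \<Rightarrow> 'a::zero) set" where
  "kvecs k = {x. \<forall>i\<ge>k. x i = 0}"

text \<open>Linear forms f : F_q^k -> F_q are exactly x |-> sum_{i<k} a_i x_i with a in F_q^k.\<close>

definition linform :: "nat \<Rightarrow> (nat \<Rightarrow> 'a::comm_ring_1) \<Rightarrow> (nat \<Rightarrow> 'a) \<Rightarrow> 'a" where
  "linform k a x = (\<Sum>i<k. a i * x i)"

text \<open>The codeword c_f, as a function on the (finite) defining set D.\<close>

definition codeword :: "nat \<Rightarrow> (nat \<Rightarrow> 'a) set \<Rightarrow> (nat \<Rightarrow> 'a::comm_ring_1) \<Rightarrow> ((nat \<Rightarrow> 'a) \<Rightarrow> 'a)" where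
  "codeword k D a = restrict (linform k a) D"

definition code :: "nat \<Rightarrow> (nat \<Rightarrow> 'a::comm_ring_1) set \<Rightarrow> ((nat \<Rightarrow> 'a) \<Rightarrow> 'a) set" where
  "code k D = {codeword k D a | a. a \<in> kvecs k}"

definition hwt :: "(nat \<Rightarrow> 'a) set \<Rightarrow> ((nat \<Rightarrow> 'a) \<Rightarrow> 'a::zero) \<Rightarrow> nat" where
  "hwt D c = card {P\<in>D. c P \<noteq> 0}"

definition zero_word :: "(nat \<Rightarrow> 'a) set \<Rightarrow> ((nat \<Rightarrow> 'a) \<Rightarrow> 'a::zero)" where
  "zero_word D = restrict (\<lambda>P. 0) D"

end

(*
  Let Z be the union of the hyperplanes x_i + x_j = 0 (i < j < h), so that D_2 = Z - {0}. For a
  nonzero linear form f with kernel H, the codeword c_f vanishes at the points of (Z \<inter> H) - {0},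
  so its weight is |Z| - |Z \<inter> H| \<ge> |D_2| + 1 - q^(k-1), with equality iff H \<subseteq> Z. The forms
  lam (x_i + x_j) satisfy H \<subseteq> Z. Conversely, if H \<subseteq> Z, no vector of H has its first h
  coordinates pairwise non-opposite; testing this on the indicator vector of the first h
  coordinates with at most three entries modified forces f = lam (x_i + x_j). Choosing these
  entries means avoiding a few forbidden values, which is possible because 2 \<noteq> 0 and q > 4.
*)

theory Submission
  imports Defs "HOL-Number_Theory.Residues"
begin

lemma two_neq_zero_if_odd_card:
  assumes "odd (card (UNIV :: 'a::{field,finite} set))"
  shows "(2::'a) \<noteq> 0"
proof
  assume "(2::'a) = 0"
  then have "CHAR('a) dvd 2"
    by (metis of_nat_eq_0_iff_char_dvd of_nat_numeral)
  moreover have "CHAR('a) dvd card (UNIV :: 'a set)"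
    by (rule CHAR_dvd_CARD)
  ultimately have "CHAR('a) dvd gcd 2 (card (UNIV :: 'a set))"
    by simp
  also have "gcd 2 (card (UNIV :: 'a set)) = 1"
    using assms by simp
  finally show False
    by simp
qed

lemma ex_not_in_four:
  assumes "4 < card (UNIV :: 'a::finite set)"
  shows "\<exists>y::'a. y \<notin> {a, b, c, d}"
proof -
  have "card {a, b, c, d} \<le> 4"
    using card_length[of "[a, b, c, d]"] by simp
  then have "{a, b, c, d} \<noteq> UNIV"
    using assms by auto
  then show ?thesis
    by blast
qed

lemma bij_betw_restrict_vanishing_outside:
  "bij_betw (\<lambda>x. restrict x I) {x :: nat \<Rightarrow> 'a::zero. \<forall>i. i \<notin> I \<longrightarrow> x i = 0} (PiE I (\<lambda>_. UNIV))"
proof (rule bij_betw_byWitness[where f' = "\<lambda>g i. if i \<in> I then g i else 0"])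
  show "\<forall>g\<in>PiE I (\<lambda>_. UNIV). restrict (\<lambda>i. if i \<in> I then g i else 0) I = g"
    by (auto simp: PiE_def extensional_def restrict_def)
qed auto

lemma finite_vanishing_outside:
  assumes "finite I"
  shows "finite {x :: nat \<Rightarrow> 'a::{zero,finite}. \<forall>i. i \<notin> I \<longrightarrow> x i = 0}"
  using bij_betw_finite[OF bij_betw_restrict_vanishing_outside[of I, where 'a = 'a]] assms
  by (simp add: finite_PiE)

lemma card_vanishing_outside:
  assumes "finite I"
  shows "card {x :: nat \<Rightarrow> 'a::{zero,finite}. \<forall>i. i \<notin> I \<longrightarrow> x i = 0}
           = card (UNIV :: 'a set) ^ card I"
  using bij_betw_same_card[OF bij_betw_restrict_vanishing_outside[of I, where 'a = 'a]] assms
  by (simp add: card_PiE)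

lemma finite_kvecs: "finite (kvecs k :: (nat \<Rightarrow> 'a::{zero,finite}) set)"
  using finite_vanishing_outside[of "{..<k}"] by (simp add: kvecs_def not_less)

lemma linform_fun_upd:
  "linform k a (x(t := z)) = linform k a x + (if t < k then a t * (z - x t) else 0)"
proof -
  have "linform k a (x(t := z)) = (\<Sum>i<k. a i * x i + (if i = t then a t * (z - x t) else 0))"
    unfolding linform_def by (rule sum.cong) (auto simp: algebra_simps)
  then show ?thesis
    by (simp add: linform_def sum.distrib)
qed

lemma linform_of_bool_less:
  "h \<le> k \<Longrightarrow> linform k a (\<lambda>i. of_bool (i < h)) = (\<Sum>i<h. a i)"
  unfolding linform_def by (rule sum.mono_neutral_cong_right) auto

definition pair_form :: "nat \<Rightarrow> nat \<Rightarrow> 'a::zero \<Rightarrow> nat \<Rightarrow> 'a" where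
  "pair_form i j lam = (\<lambda>t. if t = i \<or> t = j then lam else 0)"

lemma pair_form_in_kvecs: "i < k \<Longrightarrow> j < k \<Longrightarrow> pair_form i j lam \<in> kvecs k"
  by (auto simp: pair_form_def kvecs_def)

lemma pair_form_eq_zero_iff: "pair_form i j lam = (\<lambda>_. 0) \<longleftrightarrow> lam = 0"
  by (auto simp: pair_form_def fun_eq_iff)

lemma linform_pair_form:
  assumes "i \<noteq> j" "i < k" "j < k"
  shows "linform k (pair_form i j lam) x = lam * (x i + x j)"
proof -
  have "linform k (pair_form i j lam) x
      = (\<Sum>t<k. (if t = i then lam * x i else 0) + (if t = j then lam * x j else 0))"
    unfolding linform_def pair_form_def by (rule sum.cong) (use assms in auto)
  then show ?thesis
    using assms by (simp add: sum.distrib algebra_simps)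
qed

text \<open>Solving the equation for a coordinate t with a t \<noteq> 0 identifies the kernel with the
  vectors supported on the remaining k - 1 coordinates.\<close>
lemma card_kernel_linform:
  fixes a :: "nat \<Rightarrow> 'a::{field,finite}"
  assumes "a \<in> kvecs k" "a \<noteq> (\<lambda>_. 0)"
  shows "card {x \<in> kvecs k. linform k a x = 0} = card (UNIV :: 'a set) ^ (k - 1)"
proof -
  obtain t where t: "a t \<noteq> 0"
    using assms(2) by auto
  with assms(1) have "t < k"
    by (auto simp: kvecs_def not_less[symmetric])
  let ?K = "{x \<in> kvecs k. linform k a x = 0}"
  let ?W = "{x :: nat \<Rightarrow> 'a. \<forall>i. i \<notin> {..<k} - {t} \<longrightarrow> x i = 0}"
  have "bij_betw (\<lambda>x. x(t := 0)) ?K ?W"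
  proof (rule bij_betw_byWitness[where f' = "\<lambda>y. y(t := - linform k a y / a t)"])
    show "\<forall>x\<in>?K. (x(t := 0))(t := - linform k a (x(t := 0)) / a t) = x"
      using t \<open>t < k\<close> by (auto simp: linform_fun_upd)
    show "(\<lambda>y. y(t := - linform k a y / a t)) ` ?W \<subseteq> ?K"
      using t \<open>t < k\<close> by (auto simp: kvecs_def linform_fun_upd)
  qed (auto simp: kvecs_def)
  then have "card ?K = card ?W"
    by (rule bij_betw_same_card)
  also have "\<dots> = card (UNIV :: 'a set) ^ (k - 1)"
    using card_vanishing_outside[of "{..<k} - {t}"] \<open>t < k\<close> by simp
  finally show ?thesis .
qed

definition opposite_free :: "nat \<Rightarrow> (nat \<Rightarrow> 'a::{plus,zero}) \<Rightarrow> bool" where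
  "opposite_free h x \<longleftrightarrow> (\<forall>i j. i < j \<and> j < h \<longrightarrow> x i + x j \<noteq> 0)"

text \<open>If the kernel of a contains no opposite-free vector, each lemma below rules out a shape
  of a by exhibiting an opposite-free kernel vector: the indicator of the first h coordinates
  with at most three entries changed.\<close>

context
  fixes h k :: nat and a :: "nat \<Rightarrow> 'a::{field,finite}"
  assumes two_neq_zero: "(2::'a) \<noteq> 0"
    and h_le_k: "h \<le> k"
    and opposite_free_not_in_kernel: "\<And>x. x \<in> kvecs k \<Longrightarrow> opposite_free h x \<Longrightarrow> linform k a x \<noteq> 0"
begin

lemma coeff_eq_zero_if_ge:
  assumes "h \<le> t" "t < k"
  shows "a t = 0"
proof (rule ccontr)
  assume "a t \<noteq> 0"
  define x where "x = (\<lambda>i. of_bool (i < h))(t := - (\<Sum>i<h. a i) / a t)"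
  have "x \<in> kvecs k"
    using assms h_le_k by (auto simp: kvecs_def x_def)
  moreover have "opposite_free h x"
    using assms two_neq_zero by (auto simp: opposite_free_def x_def)
  moreover have "linform k a x = 0"
    using assms \<open>a t \<noteq> 0\<close> h_le_k by (simp add: x_def linform_fun_upd linform_of_bool_less)
  ultimately show False
    using opposite_free_not_in_kernel by blast
qed

lemma nonzero_coeffs_eq:
  assumes "4 < card (UNIV :: 'a set)" "u < h" "v < h" "u \<noteq> v" "a u \<noteq> 0" "a v \<noteq> 0"
  shows "a u = a v"
proof (rule ccontr)
  assume "a u \<noteq> a v"
  define K where "K = (\<Sum>i<h. a i) - a u - a v"
  \<comment> \<open>the excluded values of r are those for which r + 1, s + 1 or s + r vanishes\<close>
  obtain r where r: "r \<notin> {-1, (a u - K) / a v, K / (a u - a v)}"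
    using ex_not_in_four[OF assms(1), of "-1" "(a u - K) / a v" "K / (a u - a v)"] by auto
  define s where "s = - (K + a v * r) / a u"
  have "s + 1 \<noteq> 0"
  proof
    assume "s + 1 = 0"
    then have "r = (a u - K) / a v"
      using assms(5,6) by (simp add: s_def field_simps)
    with r show False
      by simp
  qed
  moreover have "s + r \<noteq> 0"
  proof
    assume "s + r = 0"
    then have "r = K / (a u - a v)"
      using assms(5) \<open>a u \<noteq> a v\<close> by (simp add: s_def field_simps)
    with r show False
      by simp
  qed
  moreover have "r + 1 \<noteq> 0"
    using r by (auto simp: add_eq_0_iff2)
  ultimately have "opposite_free h ((\<lambda>i. of_bool (i < h))(u := s, v := r))"
    using assms two_neq_zero by (auto simp: opposite_free_def add.commute)
  moreover have "(\<lambda>i. of_bool (i < h))(u := s, v := r) \<in> kvecs k"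
    using assms(2,3) h_le_k by (auto simp: kvecs_def)
  moreover have "linform k a ((\<lambda>i. of_bool (i < h))(u := s, v := r)) = K + a u * s + a v * r"
    using assms h_le_k by (simp add: linform_fun_upd linform_of_bool_less K_def algebra_simps)
  moreover have "K + a u * s + a v * r = 0"
    using assms(5) by (simp add: s_def)
  ultimately show False
    using opposite_free_not_in_kernel by metis
qed

lemma no_three_nonzero_coeffs:
  assumes "4 < card (UNIV :: 'a set)" "u < h" "v < h" "w < h" "u \<noteq> v" "u \<noteq> w" "v \<noteq> w"
    and "a u \<noteq> 0" "a v \<noteq> 0" "a w \<noteq> 0"
  shows False
proof -
  have "a v = a u" "a w = a u"
    using nonzero_coeffs_eq assms by metis+
  define M where "M = 3 - (\<Sum>i<h. a i) / a u"
  \<comment> \<open>the kernel equation becomes s + r + c = M\<close>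
  obtain c where c: "c \<notin> {-1, M}"
    using ex_not_in_four[OF assms(1), of "-1" M M M] by auto
  obtain s where s: "s \<notin> {-1, M - c + 1, - c, M}"
    using ex_not_in_four[OF assms(1)] by blast
  define r where "r = M - c - s"
  have "s + 1 \<noteq> 0" "c + 1 \<noteq> 0" "s + c \<noteq> 0"
    using s c by (auto simp: eq_neg_iff_add_eq_0)
  moreover have "r + 1 \<noteq> 0" "s + r \<noteq> 0" "r + c \<noteq> 0"
    using s c by (auto simp: r_def algebra_simps)
  ultimately have "opposite_free h ((\<lambda>i. of_bool (i < h))(u := s, v := r, w := c))"
    using assms two_neq_zero by (auto simp: opposite_free_def add.commute)
  moreover have "(\<lambda>i. of_bool (i < h))(u := s, v := r, w := c) \<in> kvecs k"
    using assms(2-4) h_le_k by (auto simp: kvecs_def)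
  moreover have "linform k a ((\<lambda>i. of_bool (i < h))(u := s, v := r, w := c))
      = (\<Sum>i<h. a i) + a u * (s + r + c - 3)"
    using assms h_le_k \<open>a v = a u\<close> \<open>a w = a u\<close>
    by (simp add: linform_fun_upd linform_of_bool_less algebra_simps)
  moreover have "(\<Sum>i<h. a i) + a u * (s + r + c - 3) = 0"
    using assms(8) by (simp add: r_def M_def)
  ultimately show False
    using opposite_free_not_in_kernel by metis
qed

lemma ex_other_nonzero_coeff:
  assumes "u < h" "a u \<noteq> 0"
  shows "\<exists>v<h. v \<noteq> u \<and> a v \<noteq> 0"
proof (rule ccontr)
  assume "\<not> ?thesis"
  then have "(\<Sum>i<h. a i) = (\<Sum>i<h. if i = u then a u else 0)"
    by (intro sum.cong) auto
  then have "linform k a ((\<lambda>i. of_bool (i < h))(u := 0 :: 'a)) = 0"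
    using assms h_le_k by (simp add: linform_fun_upd linform_of_bool_less)
  moreover have "opposite_free h ((\<lambda>i. of_bool (i < h))(u := 0 :: 'a))"
    using two_neq_zero by (auto simp: opposite_free_def)
  moreover have "(\<lambda>i. of_bool (i < h))(u := 0 :: 'a) \<in> kvecs k"
    using h_le_k by (auto simp: kvecs_def)
  ultimately show False
    using opposite_free_not_in_kernel by metis
qed

lemma ex_eq_pair_form:
  assumes "4 < card (UNIV :: 'a set)" "a \<in> kvecs k" "a \<noteq> (\<lambda>_. 0)"
  shows "\<exists>i j lam. i < j \<and> j < h \<and> lam \<noteq> 0 \<and> a = pair_form i j lam"
proof -
  have support: "t < h" if "a t \<noteq> 0" for t
  proof -
    have "t < k"
      using that assms(2) by (auto simp: kvecs_def not_le[symmetric])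
    then show "t < h"
      using that coeff_eq_zero_if_ge not_le by blast
  qed
  obtain u where u: "a u \<noteq> 0"
    using assms(3) by auto
  then obtain v where v: "v < h" "v \<noteq> u" "a v \<noteq> 0"
    using ex_other_nonzero_coeff support by blast
  have "a t = 0" if "t \<noteq> u" "t \<noteq> v" for t
  proof (rule ccontr)
    assume "a t \<noteq> 0"
    then show False
      using no_three_nonzero_coeffs[OF assms(1) support[OF u] v(1) support[OF \<open>a t \<noteq> 0\<close>]] u v that
      by auto
  qed
  moreover have "a v = a u"
    using nonzero_coeffs_eq[OF assms(1) v(1) support[OF u] v(2,3) u] .
  ultimately have "a = pair_form (min u v) (max u v) (a u)"
    by (auto simp: pair_form_def min_def max_def)
  moreover have "min u v < max u v" "max u v < h"
    using u v support by auto
  ultimately show ?thesis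
    using u by blast
qed

end

lemma hwt_codeword_punctured:
  assumes "finite Z"
  shows "int (hwt (Z - {\<lambda>_. 0}) (codeword k (Z - {\<lambda>_. 0}) a))
           = int (card Z) - int (card {x \<in> Z. linform k a x = 0})"
proof -
  have "linform k a (\<lambda>_. 0) = 0"
    by (simp add: linform_def)
  then have "hwt (Z - {\<lambda>_. 0}) (codeword k (Z - {\<lambda>_. 0}) a) = card {x \<in> Z. linform k a x \<noteq> 0}"
    unfolding hwt_def codeword_def by (intro arg_cong[where f = card]) auto
  moreover have "card Z = card {x \<in> Z. linform k a x \<noteq> 0} + card {x \<in> Z. linform k a x = 0}"
    using assms by (subst card_Un_disjoint[symmetric]) (auto intro: arg_cong[where f = card])
  ultimately show ?thesis
    by simp
qed

lemma
  fixes a :: "nat \<Rightarrow> 'a::{field,finite}"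
  assumes "Z \<subseteq> kvecs k" "a \<in> kvecs k" "a \<noteq> (\<lambda>_. 0)"
  shows hwt_codeword_punctured_ge:
      "int (hwt (Z - {\<lambda>_. 0}) (codeword k (Z - {\<lambda>_. 0}) a))
         \<ge> int (card Z) - int (card (UNIV :: 'a set)) ^ (k - 1)"
    and hwt_codeword_punctured_eq_iff:
      "int (hwt (Z - {\<lambda>_. 0}) (codeword k (Z - {\<lambda>_. 0}) a))
         = int (card Z) - int (card (UNIV :: 'a set)) ^ (k - 1)
       \<longleftrightarrow> {x \<in> kvecs k. linform k a x = 0} \<subseteq> Z"
proof -
  let ?K = "{x \<in> kvecs k. linform k a x = 0}"
  have "finite ?K"
    using finite_kvecs[of k, where 'a = 'a] by simp
  have "finite Z"
    using assms(1) finite_kvecs finite_subset by blast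
  have "{x \<in> Z. linform k a x = 0} = Z \<inter> ?K"
    using assms(1) by blast
  then have "int (hwt (Z - {\<lambda>_. 0}) (codeword k (Z - {\<lambda>_. 0}) a))
      = int (card Z) - int (card (UNIV :: 'a set)) ^ (k - 1) + (int (card ?K) - int (card (Z \<inter> ?K)))"
    using hwt_codeword_punctured[OF \<open>finite Z\<close>] card_kernel_linform[OF assms(2,3)] by simp
  moreover have "card (Z \<inter> ?K) \<le> card ?K"
    using \<open>finite ?K\<close> by (simp add: card_mono)
  ultimately show
    "int (hwt (Z - {\<lambda>_. 0}) (codeword k (Z - {\<lambda>_. 0}) a))
       \<ge> int (card Z) - int (card (UNIV :: 'a set)) ^ (k - 1)"
    "int (hwt (Z - {\<lambda>_. 0}) (codeword k (Z - {\<lambda>_. 0}) a))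
       = int (card Z) - int (card (UNIV :: 'a set)) ^ (k - 1)
     \<longleftrightarrow> ?K \<subseteq> Z"
    using card_subset_eq[OF \<open>finite ?K\<close>, of "Z \<inter> ?K"] by (auto simp: Int_absorb1)
qed

lemma nonzero_codewordE:
  assumes "c \<in> code k D - {zero_word D}"
  obtains a where "a \<in> kvecs k" "a \<noteq> (\<lambda>_. 0)" "c = codeword k D a"
proof -
  obtain a where a: "a \<in> kvecs k" "c = codeword k D a"
    using assms by (auto simp: code_def)
  moreover have "linform k (\<lambda>_. 0) = (\<lambda>_. 0 :: 'a)"
    by (simp add: fun_eq_iff linform_def)
  then have "codeword k D (\<lambda>_. 0) = zero_word D"
    by (simp add: codeword_def zero_word_def)
  ultimately show ?thesis
    using assms that by fastforce
qed

lemma finite_code: "finite (code k D :: ((nat \<Rightarrow> 'a::{comm_ring_1,finite}) \<Rightarrow> 'a) set)"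
  using finite_kvecs[of k, where 'a = 'a] by (simp add: code_def Setcompr_eq_image)

lemma int_Min_image_eqI:
  assumes "finite A" "x \<in> A" "int (f x) = m" "\<And>y. y \<in> A \<Longrightarrow> m \<le> int (f y)"
  shows "int (Min (f ` A)) = m"
proof -
  have "Min (f ` A) = f x"
    using assms by (intro Min_eqI) auto
  with assms(3) show ?thesis
    by simp
qed

definition pair_hyperplanes_union :: "nat \<Rightarrow> nat \<Rightarrow> (nat \<Rightarrow> 'a::{plus,zero}) set" where
  "pair_hyperplanes_union h k = {x \<in> kvecs k. \<not> opposite_free h x}"

lemma pair_hyperplanes_union_minus_zero:
  "{x \<in> kvecs k. x \<noteq> (\<lambda>_. 0) \<and> (\<Prod>(i, j)\<in>{(i, j). i < j \<and> j < h}. x i + x j) = 0}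
     = pair_hyperplanes_union h k - {\<lambda>_. 0 :: 'a::field}"
proof -
  have "finite {(i, j). i < j \<and> j < h}"
    by (rule finite_subset[of _ "{..<h} \<times> {..<h}"]) auto
  then show ?thesis
    by (auto simp: pair_hyperplanes_union_def opposite_free_def prod_zero_iff)
qed

lemma zero_in_pair_hyperplanes_union:
  assumes "2 \<le> h"
  shows "(\<lambda>_. 0 :: 'a::monoid_add) \<in> pair_hyperplanes_union h k"
proof -
  have "(0::nat) < 1" "1 < h"
    using assms by auto
  then show ?thesis
    unfolding pair_hyperplanes_union_def kvecs_def opposite_free_def by auto
qed

lemma finite_pair_hyperplanes_union:
  "finite (pair_hyperplanes_union h k :: (nat \<Rightarrow> 'a::{plus,zero,finite}) set)"
  using finite_kvecs[of k, where 'a = 'a] by (simp add: pair_hyperplanes_union_def)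

lemma kernel_subset_pair_hyperplanes_union_iff:
  fixes a :: "nat \<Rightarrow> 'a::{field,finite}"
  assumes "(2::'a) \<noteq> 0" "4 < card (UNIV :: 'a set)" "h \<le> k" "a \<in> kvecs k" "a \<noteq> (\<lambda>_. 0)"
  shows "{x \<in> kvecs k. linform k a x = 0} \<subseteq> pair_hyperplanes_union h k
           \<longleftrightarrow> (\<exists>i j lam. i < j \<and> j < h \<and> lam \<noteq> 0 \<and> a = pair_form i j lam)"
    (is "?kernel_subset \<longleftrightarrow> ?pair_form")
proof
  assume ?kernel_subset
  then show ?pair_form
    using ex_eq_pair_form[OF assms(1,3) _ assms(2,4,5)] by (auto simp: pair_hyperplanes_union_def)
next
  assume ?pair_form
  then obtain i j lam where "i < j" "j < h" "lam \<noteq> 0" "a = pair_form i j lam"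
    by blast
  then show ?kernel_subset
    using linform_pair_form[of i j k lam] assms(3)
    by (auto simp: pair_hyperplanes_union_def opposite_free_def)
qed

lemma codeword_pair_form_nonzero:
  assumes "3 \<le> h" "h \<le> k" "i < j" "j < h" "(lam :: 'a::field) \<noteq> 0"
  defines "D \<equiv> pair_hyperplanes_union h k - {\<lambda>_. 0 :: 'a}"
  shows "codeword k D (pair_form i j lam) \<noteq> zero_word D"
proof -
  define e where "e = (\<lambda>t. of_bool (t = i) :: 'a)"
  obtain w where w: "w < h" "w \<noteq> i" "w \<noteq> j"
  proof -
    have "\<exists>w<3. w \<noteq> i \<and> w \<noteq> j"
      by presburger
    then show ?thesis
      using that assms(1) by (meson less_le_trans)
  qed
  have "e j + e w = 0"
    using assms(3) w by (simp add: e_def)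
  then have "\<not> opposite_free h e"
    using w assms(4) unfolding opposite_free_def by (metis add.commute linorder_neqE_nat)
  then have "e \<in> D"
    using assms by (auto simp: D_def pair_hyperplanes_union_def e_def kvecs_def fun_eq_iff)
  moreover have "linform k (pair_form i j lam) e = lam"
    using assms by (simp add: linform_pair_form e_def)
  ultimately have "codeword k D (pair_form i j lam) e \<noteq> zero_word D e"
    using assms(5) by (simp add: codeword_def zero_word_def)
  then show ?thesis
    by auto
qed

lemma card_pair_hyperplanes_union:
  assumes "2 \<le> h"
  shows "card (pair_hyperplanes_union h k :: (nat \<Rightarrow> 'a::{monoid_add,finite}) set)
           = card (pair_hyperplanes_union h k - {\<lambda>_. 0 :: 'a}) + 1"
  using zero_in_pair_hyperplanes_union[OF assms] finite_pair_hyperplanes_union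
  by (metis Suc_eq_plus1 card_Suc_Diff1)

lemma hwt_pair_hyperplanes_code_ge:
  fixes h k :: nat and c :: "(nat \<Rightarrow> 'a::{field,finite}) \<Rightarrow> 'a"
  defines "D \<equiv> pair_hyperplanes_union h k - {\<lambda>_. 0 :: 'a}"
  assumes "2 \<le> h" "c \<in> code k D - {zero_word D}"
  shows "int (card D) - int (card (UNIV :: 'a set)) ^ (k - 1) + 1 \<le> int (hwt D c)"
proof -
  obtain a where a: "a \<in> kvecs k" "a \<noteq> (\<lambda>_. 0)" "c = codeword k D a"
    using assms(3) by (rule nonzero_codewordE)
  have "pair_hyperplanes_union h k \<subseteq> (kvecs k :: (nat \<Rightarrow> 'a) set)"
    by (auto simp: pair_hyperplanes_union_def)
  from hwt_codeword_punctured_ge[OF this a(1,2)] show ?thesis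
    unfolding a(3) D_def card_pair_hyperplanes_union[OF assms(2)] by simp
qed

lemma hwt_pair_hyperplanes_code_eq_iff:
  fixes h k :: nat and c :: "(nat \<Rightarrow> 'a::{field,finite}) \<Rightarrow> 'a"
  defines "D \<equiv> pair_hyperplanes_union h k - {\<lambda>_. 0 :: 'a}"
  assumes "(2::'a) \<noteq> 0" "4 < card (UNIV :: 'a set)" "2 \<le> h" "h \<le> k"
    and "c \<in> code k D - {zero_word D}"
  shows "int (hwt D c) = int (card D) - int (card (UNIV :: 'a set)) ^ (k - 1) + 1
           \<longleftrightarrow> (\<exists>i j lam. i < j \<and> j < h \<and> lam \<noteq> 0 \<and> c = codeword k D (pair_form i j lam))"
proof -
  have "pair_hyperplanes_union h k \<subseteq> (kvecs k :: (nat \<Rightarrow> 'a) set)"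
    by (auto simp: pair_hyperplanes_union_def)
  have min_weight_iff: "int (hwt D (codeword k D b)) = int (card D) - int (card (UNIV :: 'a set)) ^ (k - 1) + 1
      \<longleftrightarrow> (\<exists>i j lam. i < j \<and> j < h \<and> lam \<noteq> 0 \<and> b = pair_form i j lam)"
    if "b \<in> kvecs k" "b \<noteq> (\<lambda>_. 0)" for b
    using hwt_codeword_punctured_eq_iff[OF \<open>pair_hyperplanes_union h k \<subseteq> kvecs k\<close> that]
      kernel_subset_pair_hyperplanes_union_iff[OF assms(2,3,5) that]
    unfolding D_def card_pair_hyperplanes_union[OF assms(4)] by (simp add: algebra_simps)
  show ?thesis
  proof
    assume "int (hwt D c) = int (card D) - int (card (UNIV :: 'a set)) ^ (k - 1) + 1"
    moreover obtain a where "a \<in> kvecs k" "a \<noteq> (\<lambda>_. 0)" "c = codeword k D a"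
      using assms(6) by (rule nonzero_codewordE)
    ultimately show "\<exists>i j lam. i < j \<and> j < h \<and> lam \<noteq> 0 \<and> c = codeword k D (pair_form i j lam)"
      using min_weight_iff by blast
  next
    assume "\<exists>i j lam. i < j \<and> j < h \<and> lam \<noteq> 0 \<and> c = codeword k D (pair_form i j lam)"
    then obtain i j lam where "i < j" "j < h" "lam \<noteq> 0" "c = codeword k D (pair_form i j lam)"
      by blast
    moreover have "pair_form i j lam \<in> kvecs k"
      using \<open>i < j\<close> \<open>j < h\<close> assms(5) by (simp add: pair_form_in_kvecs)
    ultimately show "int (hwt D c) = int (card D) - int (card (UNIV :: 'a set)) ^ (k - 1) + 1"
      using min_weight_iff pair_form_eq_zero_iff by blast
  qed
qed

theorem proposition3p2:
  fixes p m h k :: nat and D2 :: "(nat \<Rightarrow> 'a::{field,finite}) set"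
  assumes "prime p" and "odd p" and "card (UNIV :: 'a set) = p ^ m" and "card (UNIV :: 'a set) > 5"
    and "3 \<le> h" and "h \<le> k"
    and D2_def: "D2 = {x \<in> kvecs k. x \<noteq> (\<lambda>_. 0) \<and>
                   (\<Prod>(i, j)\<in>{(i, j). i < j \<and> j < h}. x i + x j) = 0}"
  shows "int (Min (hwt D2 ` (code k D2 - {zero_word D2})))
           = int (card D2) - int (card (UNIV :: 'a set)) ^ (k - 1) + 1
         \<and> (\<forall>c \<in> code k D2 - {zero_word D2}.
           int (hwt D2 c) = int (card D2) - int (card (UNIV :: 'a set)) ^ (k - 1) + 1
           \<longleftrightarrow> (\<exists>i j (lam::'a). i < j \<and> j < h \<and> lam \<noteq> 0 \<and>
                 c = codeword k D2 (\<lambda>t. if t = i \<or> t = j then lam else 0)))"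
proof -
  have D2_eq: "D2 = pair_hyperplanes_union h k - {\<lambda>_. 0}"
    unfolding D2_def by (rule pair_hyperplanes_union_minus_zero)
  have two: "(2::'a) \<noteq> 0"
    by (rule two_neq_zero_if_odd_card) (simp add: assms(2,3))
  have "4 < card (UNIV :: 'a set)" "2 \<le> h" "(0::nat) < 1" "1 < h" "(1::'a) \<noteq> 0"
    using assms(4,5) by auto
  have weight_ge: "int (card D2) - int (card (UNIV :: 'a set)) ^ (k - 1) + 1 \<le> int (hwt D2 c)"
    if "c \<in> code k D2 - {zero_word D2}" for c
    using that unfolding D2_eq by (rule hwt_pair_hyperplanes_code_ge[OF \<open>2 \<le> h\<close>])
  note weight_iff = hwt_pair_hyperplanes_code_eq_iff[OF two \<open>4 < _\<close> \<open>2 \<le> h\<close> assms(6), folded D2_eq]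
  have "pair_form 0 1 (1::'a) \<in> kvecs k"
    using assms(5,6) by (simp add: pair_form_in_kvecs)
  then have c0: "codeword k D2 (pair_form 0 1 1) \<in> code k D2 - {zero_word D2}"
    using codeword_pair_form_nonzero[OF assms(5,6) \<open>0 < 1\<close> \<open>1 < h\<close> \<open>(1::'a) \<noteq> 0\<close>]
    unfolding D2_eq code_def by blast
  with weight_iff have "int (hwt D2 (codeword k D2 (pair_form 0 1 1)))
      = int (card D2) - int (card (UNIV :: 'a set)) ^ (k - 1) + 1"
    using \<open>0 < 1\<close> \<open>1 < h\<close> \<open>(1::'a) \<noteq> 0\<close> by blast
  then have "int (Min (hwt D2 ` (code k D2 - {zero_word D2})))
      = int (card D2) - int (card (UNIV :: 'a set)) ^ (k - 1) + 1"
    using c0 weight_ge by (intro int_Min_image_eqI) (auto simp: finite_code)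
  then show ?thesis
    using weight_iff unfolding pair_form_def by blast
qed

end
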